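(* Let $\mathbf C\in\mathbb C^{N\times N}$ be a diagonal matrix with exactly one diagonal entry equal to $1$ (at an unknown position $\sigma$) and all other entries $0$. Let $U_{\mathbf C}$ be a block-encoding of $\mathbf C$ and let $V_{\mathbf C}$ be a unitary with $V_{\mathbf C}|0\rangle=|C\rangle\rangle=|\sigma,\sigma\rangle$. Then any quantum algorithm that finds $\sigma$ with probability at least $2/3$ for all instances requires $\Omega(\sqrt N)$ queries to $U_{\mathbf C}$ (including inverses and controlled versions), whereas a single application of $V_{\mathbf C}$ to $|0\rangle$ followed by a computational-basis measurement determines $\sigma$ with certainty.
   Context: Vectorization: $|F\rangle\rangle:=\sum_{j,k}f_{jk}|j,k\rangle$ for ${\bf F}=\sum f_{jk}|j\rangle\langle k|$. A block-encoding of ${\bf M}$ with $\|{\bf M}\|\le1$ is a unitary $U$ on $\mathbb C^N\otimes\mathbb C^d$ with $(\mathbb 1_N\otimes\langle0|)U(\mathbb 1_N\otimes|0\rangle)={\bf M}$; the oracle $U_{\mathbf C}$ may be any such unitary. *)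

theory Defs
  imports Complex_Main "Jordan_Normal_Form.Matrix"
begin

definition adj :: "complex mat \<Rightarrow> complex mat" where
  "adj U = mat (dim_col U) (dim_row U) (\<lambda>(i,j). cnj (U $$ (j,i)))"

definition unitary_mat :: "nat \<Rightarrow> complex mat \<Rightarrow> bool" where
  "unitary_mat n U \<longleftrightarrow> U \<in> carrier_mat n n \<and> adj U * U = 1\<^sub>m n \<and> U * adj U = 1\<^sub>m n"

definition ket :: "nat \<Rightarrow> nat \<Rightarrow> complex vec" where
  "ket n k = vec n (\<lambda>i. if i = k then 1 else 0)"

text \<open>Tensor conventions: |x> (x) |y> with y ranging over m values has index x*m+y.\<close>

text \<open>Vectorization |F>> = sum_{j,k} f_jk |j,k>.\<close>
definition vectorize :: "complex mat \<Rightarrow> complex vec" where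
  "vectorize F = vec (dim_row F * dim_col F)
     (\<lambda>i. F $$ (i div dim_col F, i mod dim_col F))"

definition diag_C :: "nat \<Rightarrow> nat \<Rightarrow> complex mat" where
  "diag_C N \<sigma> = mat N N (\<lambda>(i,j). if i = \<sigma> \<and> j = \<sigma> then 1 else 0)"

text \<open>Block-encoding on C^N (x) C^d: (1_N (x) <0|) U (1_N (x) |0>) = M.\<close>
definition block_encoding :: "nat \<Rightarrow> nat \<Rightarrow> complex mat \<Rightarrow> complex mat \<Rightarrow> bool" where
  "block_encoding N d M U \<longleftrightarrow> unitary_mat (N*d) U \<and> 0 < d \<and>
     (\<forall>i<N. \<forall>j<N. U $$ (i*d, j*d) = M $$ (i,j))"

definition tensor_id :: "complex mat \<Rightarrow> nat \<Rightarrow> complex mat" where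
  "tensor_id B W = mat (dim_row B * W) (dim_col B * W)
     (\<lambda>(i,j). if i mod W = j mod W then B $$ (i div W, j div W) else 0)"

text \<open>Controlled version |0><0| (x) 1 + |1><1| (x) B, control qubit first.\<close>
definition controlled :: "complex mat \<Rightarrow> complex mat" where
  "controlled B = four_block_mat (1\<^sub>m (dim_row B)) (0\<^sub>m (dim_row B) (dim_col B))
                                  (0\<^sub>m (dim_row B) (dim_col B)) B"

text \<open>Query gate acting on C^2 (x) (C^N (x) C^d) (x) C^W: controlled U, or controlled
  inverse U^dagger when the flag is True.  Uncontrolled calls are simulated by
  preparing the control qubit in |1> with the interleaved unitaries.\<close>
definition query_gate :: "complex mat \<Rightarrow> nat \<Rightarrow> bool \<Rightarrow> complex mat" where
  "query_gate U W is_inv = tensor_id (controlled (if is_inv then adj U else U)) W"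

text \<open>A T-query algorithm is a list of T steps (A_k, inv_k) followed by a final unitary;
  step k applies A_k and then a query.  Started in |0>.\<close>
fun run_steps :: "complex mat \<Rightarrow> nat \<Rightarrow> (complex mat \<times> bool) list \<Rightarrow> complex vec \<Rightarrow> complex vec" where
  "run_steps U W [] v = v"
| "run_steps U W ((A, is_inv) # rest) v = run_steps U W rest (query_gate U W is_inv *\<^sub>v (A *\<^sub>v v))"

definition final_state ::
  "complex mat \<Rightarrow> nat \<Rightarrow> (complex mat \<times> bool) list \<Rightarrow> complex mat \<Rightarrow> nat \<Rightarrow> complex vec" where
  "final_state U W steps Af D = Af *\<^sub>v run_steps U W steps (ket D 0)"

definition valid_alg :: "nat \<Rightarrow> (complex mat \<times> bool) list \<Rightarrow> complex mat \<Rightarrow> bool" where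
  "valid_alg D steps Af \<longleftrightarrow> unitary_mat D Af \<and> (\<forall>s \<in> set steps. unitary_mat D (fst s))"

definition outcome_prob :: "complex vec \<Rightarrow> (nat \<Rightarrow> nat) \<Rightarrow> nat \<Rightarrow> real" where
  "outcome_prob v out x = (\<Sum>k<dim_vec v. if out k = x then (cmod (v $ k))\<^sup>2 else 0)"

end

theory Submission
  imports Defs "HOL-Analysis.L2_Norm" "HOL-Analysis.Convex"
begin

text \<open>
  The lower bound is the hybrid argument of Bennett, Bernstein, Brassard and Vazirani applied to
  permutation oracles. The oracle for instance \<open>\<sigma>\<close> swaps the ancilla states \<open>|0>\<close> and \<open>|1>\<close> in
  every block except block \<open>\<sigma>\<close>; it is a self-inverse block-encoding of \<open>|\<sigma>><\<sigma>|\<close>. The reference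
  oracle swaps in every block and differs from oracle \<open>\<sigma>\<close> only on the basis states of block
  \<open>\<sigma>\<close> with ancilla \<open>0\<close> or \<open>1\<close>. Hence after \<open>T\<close> queries the final state for \<open>\<sigma>\<close> is within
  \<open>h \<sigma> = \<Sum>\<^sub>t 2 \<surd>(weight of that block in the t-th query input of the reference run)\<close>
  of the reference final state, and Cauchy--Schwarz gives \<open>\<Sum>\<^sub>\<sigma> h \<sigma>\<^sup>2 \<le> 4 T\<^sup>2\<close>. Since the
  reference state can put total probability at most \<open>1\<close> on the \<open>N\<close> answers, success probability
  \<open>2/3\<close> on every instance forces \<open>N/3 - 1 \<le> 4 T\<^sup>2\<close>, so \<open>T \<ge> \<surd>N / 4\<close>.
  The vectorized encoding \<open>|\<sigma>,\<sigma>>\<close> is a basis state, so measuring its first register gives \<open>\<sigma>\<close>.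
\<close>

definition perm_mat :: "nat \<Rightarrow> (nat \<Rightarrow> nat) \<Rightarrow> complex mat" where
  "perm_mat n p = mat n n (\<lambda>(i,j). if j = p i then 1 else 0)"

definition involution_on :: "nat \<Rightarrow> (nat \<Rightarrow> nat) \<Rightarrow> bool" where
  "involution_on n p \<longleftrightarrow> (\<forall>i<n. p i < n \<and> p (p i) = i)"

lemma perm_mat_carrier [simp]:
  "perm_mat n p \<in> carrier_mat n n" "dim_row (perm_mat n p) = n" "dim_col (perm_mat n p) = n"
  by (auto simp: perm_mat_def)

lemma row_perm_mat: "i < n \<Longrightarrow> row (perm_mat n p) i = unit_vec n (p i)"
  by (auto simp: perm_mat_def unit_vec_def)

lemma adj_perm_mat:
  assumes "involution_on n p"
  shows "adj (perm_mat n p) = perm_mat n p"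
proof (rule eq_matI)
  fix i j assume "i < dim_row (perm_mat n p)" "j < dim_col (perm_mat n p)"
  then have "i < n" "j < n" by auto
  moreover have "i = p j \<longleftrightarrow> j = p i"
    using assms \<open>i < n\<close> \<open>j < n\<close> unfolding involution_on_def by metis
  ultimately show "adj (perm_mat n p) $$ (i, j) = perm_mat n p $$ (i, j)"
    by (simp add: adj_def perm_mat_def)
qed (simp_all add: adj_def)

lemma perm_mat_mult_self:
  assumes "involution_on n p"
  shows "perm_mat n p * perm_mat n p = 1\<^sub>m n"
proof (rule eq_matI)
  fix i j assume "i < dim_row (1\<^sub>m n)" "j < dim_col (1\<^sub>m n)"
  then have ij: "i < n" "j < n" by auto
  then have "p i < n" "p (p i) = i" using assms unfolding involution_on_def by auto
  then have "(perm_mat n p * perm_mat n p) $$ (i, j) = perm_mat n p $$ (p i, j)"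
    using ij by (simp add: row_perm_mat)
  then show "(perm_mat n p * perm_mat n p) $$ (i, j) = 1\<^sub>m n $$ (i, j)"
    using ij \<open>p i < n\<close> \<open>p (p i) = i\<close> by (auto simp: perm_mat_def)
qed auto

lemma unitary_perm_mat: "involution_on n p \<Longrightarrow> unitary_mat n (perm_mat n p)"
  unfolding unitary_mat_def by (simp add: adj_perm_mat perm_mat_mult_self)

definition controlled_perm :: "nat \<Rightarrow> (nat \<Rightarrow> nat) \<Rightarrow> nat \<Rightarrow> nat" where
  "controlled_perm n p r = (if r < n then r else n + p (r - n))"

lemma controlled_perm_mat: "controlled (perm_mat n p) = perm_mat (n + n) (controlled_perm n p)"
  by (rule eq_matI) (auto simp: controlled_def controlled_perm_def perm_mat_def)

lemma involution_on_controlled_perm: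
  "involution_on n p \<Longrightarrow> involution_on (n + n) (controlled_perm n p)"
  unfolding involution_on_def controlled_perm_def by auto

definition tensor_perm :: "nat \<Rightarrow> (nat \<Rightarrow> nat) \<Rightarrow> nat \<Rightarrow> nat" where
  "tensor_perm W p i = p (i div W) * W + i mod W"

lemma tensor_perm_div_mod:
  assumes "0 < W"
  shows "tensor_perm W p i div W = p (i div W)" "tensor_perm W p i mod W = i mod W"
  using assms unfolding tensor_perm_def by auto

lemma tensor_id_perm_mat:
  assumes "0 < W"
  shows "tensor_id (perm_mat n p) W = perm_mat (n * W) (tensor_perm W p)"
proof (rule eq_matI)
  fix i j assume "i < dim_row (perm_mat (n * W) (tensor_perm W p))"
    "j < dim_col (perm_mat (n * W) (tensor_perm W p))"
  then have "i < n * W" "j < n * W" by auto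
  then have "i div W < n" "j div W < n" by (simp_all add: less_mult_imp_div_less)
  moreover have "j = tensor_perm W p i \<longleftrightarrow> j div W = p (i div W) \<and> j mod W = i mod W"
    using assms by (metis div_mult_mod_eq tensor_perm_div_mod)
  ultimately show "tensor_id (perm_mat n p) W $$ (i, j) = perm_mat (n * W) (tensor_perm W p) $$ (i, j)"
    using \<open>i < n * W\<close> \<open>j < n * W\<close> by (auto simp: tensor_id_def perm_mat_def)
qed (auto simp: tensor_id_def)

lemma involution_on_tensor_perm:
  assumes "0 < W" "involution_on n p"
  shows "involution_on (n * W) (tensor_perm W p)"
  unfolding involution_on_def
proof (intro allI impI conjI)
  fix i assume "i < n * W"
  then have "p (i div W) < n" "p (p (i div W)) = i div W"
    using assms(2) less_mult_imp_div_less unfolding involution_on_def by auto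
  then show "tensor_perm W p i < n * W"
    using assms(1) by (metis div_less_iff_less_mult tensor_perm_div_mod(1))
  show "tensor_perm W p (tensor_perm W p i) = i"
    using \<open>p (p (i div W)) = i div W\<close> assms(1) by (metis div_mult_mod_eq tensor_perm_div_mod)
qed

text \<open>Outside block \<open>s\<close>, \<open>1 - r mod d\<close> swaps the ancilla states \<open>0\<close> and \<open>1\<close>. The value
  \<open>s = N\<close> exempts no block and gives the reference oracle, which encodes no instance.\<close>

definition oracle_perm :: "nat \<Rightarrow> nat \<Rightarrow> nat \<Rightarrow> nat" where
  "oracle_perm d s r =
     r div d * d + (if r div d \<noteq> s \<and> r mod d < 2 then 1 - r mod d else r mod d)"

definition oracle_mat :: "nat \<Rightarrow> nat \<Rightarrow> nat \<Rightarrow> complex mat" where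
  "oracle_mat N d s = perm_mat (N * d) (oracle_perm d s)"

lemma oracle_perm_div_mod:
  assumes "2 \<le> d"
  shows "oracle_perm d s r div d = r div d"
    and "oracle_perm d s r mod d = (if r div d \<noteq> s \<and> r mod d < 2 then 1 - r mod d else r mod d)"
proof -
  have "(if r div d \<noteq> s \<and> r mod d < 2 then 1 - r mod d else r mod d) < d"
    using assms by auto
  then show "oracle_perm d s r div d = r div d"
    and "oracle_perm d s r mod d = (if r div d \<noteq> s \<and> r mod d < 2 then 1 - r mod d else r mod d)"
    unfolding oracle_perm_def by auto
qed

lemma involution_on_oracle_perm:
  assumes "2 \<le> d"
  shows "involution_on (N * d) (oracle_perm d s)"
  unfolding involution_on_def
proof (intro allI impI conjI)
  fix i assume "i < N * d"
  then have "oracle_perm d s i div d < N"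
    using assms by (simp add: oracle_perm_div_mod less_mult_imp_div_less)
  then show "oracle_perm d s i < N * d"
    using assms by (simp add: div_less_iff_less_mult)
  show "oracle_perm d s (oracle_perm d s i) = i"
    using assms by (auto simp: oracle_perm_def[of d s "oracle_perm d s i"] oracle_perm_div_mod)
qed

lemma block_encoding_oracle_mat:
  assumes "2 \<le> d" "s < N"
  shows "block_encoding N d (diag_C N s) (oracle_mat N d s)"
  unfolding block_encoding_def
proof (intro conjI allI impI)
  show "unitary_mat (N * d) (oracle_mat N d s)"
    unfolding oracle_mat_def by (rule unitary_perm_mat[OF involution_on_oracle_perm[OF assms(1)]])
  show "0 < d" using assms by simp
  fix i j assume ij: "i < N" "j < N"
  then have "i * d < N * d" "j * d < N * d" using assms by auto
  moreover have "oracle_perm d s (i * d) = i * d + (if i \<noteq> s then 1 else 0)"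
    using assms by (simp add: oracle_perm_def)
  moreover have "j * d = i * d + (if i \<noteq> s then 1 else 0) \<longleftrightarrow> i = s \<and> j = s"
  proof
    assume eq: "j * d = i * d + (if i \<noteq> s then 1 else 0)"
    have "i = s"
    proof (rule ccontr)
      assume "i \<noteq> s"
      then have "(j * d) mod d = (i * d + 1) mod d" using eq by simp
      then show False using assms(1) by (simp add: mod_Suc)
    qed
    then show "i = s \<and> j = s" using eq assms by simp
  qed simp
  ultimately show "oracle_mat N d s $$ (i * d, j * d) = diag_C N s $$ (i, j)"
    using ij by (simp add: oracle_mat_def perm_mat_def diag_C_def)
qed

text \<open>The query gate for oracle \<open>s\<close> permutes the basis of \<open>C^2 \<otimes> (C^N \<otimes> C^d) \<otimes> C^W\<close>;
  since the oracle is an involution, queries to its adjoint are the same gate.\<close>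

definition query_perm :: "nat \<Rightarrow> nat \<Rightarrow> nat \<Rightarrow> nat \<Rightarrow> nat \<Rightarrow> nat" where
  "query_perm N d W s = tensor_perm W (controlled_perm (N * d) (oracle_perm d s))"

lemma involution_on_query_perm:
  assumes "2 \<le> d" "0 < W"
  shows "involution_on (2 * (N * d) * W) (query_perm N d W s)"
  using involution_on_tensor_perm[OF assms(2) involution_on_controlled_perm[OF
      involution_on_oracle_perm[OF assms(1)]]]
  unfolding query_perm_def by (simp add: mult_2)

lemma query_gate_oracle_mat:
  assumes "2 \<le> d" "0 < W"
  shows "query_gate (oracle_mat N d s) W b = perm_mat (2 * (N * d) * W) (query_perm N d W s)"
  using assms adj_perm_mat[OF involution_on_oracle_perm[OF assms(1)]]
  by (simp add: query_gate_def oracle_mat_def controlled_perm_mat tensor_id_perm_mat query_perm_def mult_2)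

lemma unitary_query_gate_oracle_mat:
  "2 \<le> d \<Longrightarrow> 0 < W \<Longrightarrow> unitary_mat (2 * (N * d) * W) (query_gate (oracle_mat N d s) W b)"
  by (simp add: query_gate_oracle_mat unitary_perm_mat involution_on_query_perm)

text \<open>The only basis states on which the gates for oracle \<open>s < N\<close> and for the reference
  oracle can differ are those with control \<open>1\<close> and ancilla \<open>0\<close> or \<open>1\<close> in block \<open>s\<close>;
  \<open>marked_block\<close> returns that \<open>s\<close>, and \<open>N\<close> for all other basis states.\<close>

definition marked_block :: "nat \<Rightarrow> nat \<Rightarrow> nat \<Rightarrow> nat \<Rightarrow> nat" where
  "marked_block N d W i =
     (if N * d \<le> i div W \<and> (i div W - N * d) mod d < 2 then (i div W - N * d) div d else N)"

lemma query_perm_neq_reference: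
  assumes "2 \<le> d" "0 < W" "s < N" "i < 2 * (N * d) * W"
    and "query_perm N d W s i \<noteq> query_perm N d W N i"
  shows "marked_block N d W i = s \<and> query_perm N d W s i = i"
proof -
  define r where "r = i div W - N * d"
  have "N * d \<le> i div W"
  proof (rule ccontr)
    assume "\<not> N * d \<le> i div W"
    then show False
      using assms(5) by (simp add: query_perm_def tensor_perm_def controlled_perm_def)
  qed
  have "i div W < 2 * (N * d)" using assms(4) by (simp add: less_mult_imp_div_less)
  then have "r < N * d" unfolding r_def by simp
  then have "r div d < N" by (simp add: less_mult_imp_div_less)
  have "oracle_perm d s r \<noteq> oracle_perm d N r"
    using assms(5) \<open>N * d \<le> i div W\<close>
    by (auto simp: query_perm_def tensor_perm_def controlled_perm_def r_def)
  then have "r div d = s \<and> r mod d < 2"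
    using \<open>r div d < N\<close> unfolding oracle_perm_def by (auto split: if_splits)
  then have "oracle_perm d s r = r" unfolding oracle_perm_def by (metis div_mult_mod_eq)
  then show ?thesis
    using \<open>r div d = s \<and> r mod d < 2\<close> \<open>N * d \<le> i div W\<close>
    by (simp add: query_perm_def tensor_perm_def controlled_perm_def marked_block_def r_def)
qed

lemma marked_block_query_perm_reference:
  assumes "2 \<le> d" "0 < W"
  shows "marked_block N d W (query_perm N d W N i) = marked_block N d W i"
  using assms
  by (auto simp: marked_block_def query_perm_def tensor_perm_div_mod controlled_perm_def
      oracle_perm_div_mod)

definition sq_norm :: "complex vec \<Rightarrow> real" where
  "sq_norm v = (\<Sum>i<dim_vec v. (cmod (v $ i))\<^sup>2)"

definition vec_norm :: "complex vec \<Rightarrow> real" where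
  "vec_norm v = sqrt (sq_norm v)"

lemma vec_norm_eq_L2_set: "vec_norm v = L2_set (\<lambda>i. cmod (v $ i)) {..<dim_vec v}"
  unfolding vec_norm_def sq_norm_def L2_set_def ..

lemma vec_norm_triangle:
  assumes "dim_vec u = n" "dim_vec v = n" "dim_vec w = n"
  shows "vec_norm (u - w) \<le> vec_norm (u - v) + vec_norm (v - w)"
proof -
  have "vec_norm (u - w) = L2_set (\<lambda>i. cmod (u $ i - w $ i)) {..<n}"
    unfolding vec_norm_eq_L2_set using assms by (auto intro: L2_set_cong)
  also have "\<dots> \<le> L2_set (\<lambda>i. cmod (u $ i - v $ i) + cmod (v $ i - w $ i)) {..<n}"
    by (rule L2_set_mono) (auto intro: norm_diff_triangle_le)
  also have "\<dots> \<le> L2_set (\<lambda>i. cmod (u $ i - v $ i)) {..<n} + L2_set (\<lambda>i. cmod (v $ i - w $ i)) {..<n}"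
    by (rule L2_set_triangle_ineq)
  also have "\<dots> = vec_norm (u - v) + vec_norm (v - w)"
    unfolding vec_norm_eq_L2_set using assms by (auto intro!: arg_cong2[where f = "(+)"] L2_set_cong)
  finally show ?thesis .
qed

lemma unitary_mat_carrier: "unitary_mat n A \<Longrightarrow> A \<in> carrier_mat n n"
  unfolding unitary_mat_def by simp

lemma unitary_mat_columns_orthonormal:
  assumes "unitary_mat n A" "k < n" "j < n"
  shows "(\<Sum>i<n. cnj (A $$ (i, k)) * A $$ (i, j)) = (if k = j then 1 else 0)"
proof -
  have "(adj A * A) $$ (k, j) = (\<Sum>i<n. cnj (A $$ (i, k)) * A $$ (i, j))"
    using assms unitary_mat_carrier[OF assms(1)]
    by (auto simp: adj_def scalar_prod_def atLeast0LessThan intro!: sum.cong)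
  then show ?thesis using assms unfolding unitary_mat_def by simp
qed

lemma unitary_sq_norm:
  assumes U: "unitary_mat n A" and v: "v \<in> carrier_vec n"
  shows "sq_norm (A *\<^sub>v v) = sq_norm v"
proof -
  have A: "A \<in> carrier_mat n n" using unitary_mat_carrier[OF U] .
  have Av: "(A *\<^sub>v v) $ i = (\<Sum>j<n. A $$ (i, j) * v $ j)" if "i < n" for i
    using that A v by (auto simp: scalar_prod_def atLeast0LessThan intro!: sum.cong)
  have "complex_of_real (sq_norm (A *\<^sub>v v)) = (\<Sum>i<n. (A *\<^sub>v v) $ i * cnj ((A *\<^sub>v v) $ i))"
    using A unfolding sq_norm_def by (simp only: of_real_sum complex_norm_square dim_mult_mat_vec carrier_matD)
  also have "\<dots> = (\<Sum>i<n. (\<Sum>j<n. A $$ (i, j) * v $ j) * (\<Sum>k<n. cnj (A $$ (i, k)) * cnj (v $ k)))"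
    by (rule sum.cong) (simp_all add: Av)
  also have "\<dots> = (\<Sum>i<n. \<Sum>j<n. \<Sum>k<n. A $$ (i, j) * v $ j * (cnj (A $$ (i, k)) * cnj (v $ k)))"
    by (simp add: sum_product)
  also have "\<dots> = (\<Sum>j<n. \<Sum>i<n. \<Sum>k<n. A $$ (i, j) * v $ j * (cnj (A $$ (i, k)) * cnj (v $ k)))"
    by (rule sum.swap)
  also have "\<dots> = (\<Sum>j<n. \<Sum>k<n. \<Sum>i<n. A $$ (i, j) * v $ j * (cnj (A $$ (i, k)) * cnj (v $ k)))"
    by (rule sum.cong[OF refl], rule sum.swap)
  also have "\<dots> = (\<Sum>j<n. \<Sum>k<n. v $ j * cnj (v $ k) * (\<Sum>i<n. cnj (A $$ (i, k)) * A $$ (i, j)))"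
    by (simp add: sum_distrib_left mult_ac)
  also have "\<dots> = (\<Sum>j<n. \<Sum>k<n. if k = j then v $ j * cnj (v $ k) else 0)"
    by (intro sum.cong refl) (simp add: unitary_mat_columns_orthonormal[OF U])
  also have "\<dots> = (\<Sum>j<n. v $ j * cnj (v $ j))"
    by simp
  also have "\<dots> = complex_of_real (sq_norm v)"
    using v unfolding sq_norm_def by (simp only: of_real_sum complex_norm_square carrier_vecD)
  finally show ?thesis by simp
qed

lemma unitary_vec_norm_diff:
  assumes U: "unitary_mat n A" and "v \<in> carrier_vec n" "w \<in> carrier_vec n"
  shows "vec_norm (A *\<^sub>v v - A *\<^sub>v w) = vec_norm (v - w)"
proof -
  have "A *\<^sub>v v - A *\<^sub>v w = A *\<^sub>v (v - w)"
    using mult_minus_distrib_mat_vec[OF unitary_mat_carrier[OF U] assms(2,3)] by simp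
  then show ?thesis using assms unitary_sq_norm[OF U] by (simp add: vec_norm_def)
qed

lemma outcome_prob_nonneg: "0 \<le> outcome_prob v out x"
  unfolding outcome_prob_def by (simp add: sum_nonneg)

lemma sum_outcome_prob_le: "(\<Sum>x<N. outcome_prob v out x) \<le> sq_norm v"
proof -
  have "(\<Sum>x<N. outcome_prob v out x)
      = (\<Sum>k<dim_vec v. \<Sum>x<N. if out k = x then (cmod (v $ k))\<^sup>2 else 0)"
    unfolding outcome_prob_def by (rule sum.swap)
  also have "\<dots> = (\<Sum>k<dim_vec v. if out k < N then (cmod (v $ k))\<^sup>2 else 0)"
    by simp
  also have "\<dots> \<le> sq_norm v"
    unfolding sq_norm_def by (rule sum_mono) simp
  finally show ?thesis .
qed

lemma sqrt_outcome_prob_eq_L2_set: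
  "sqrt (outcome_prob v out x) = L2_set (\<lambda>k. if out k = x then cmod (v $ k) else 0) {..<dim_vec v}"
  unfolding outcome_prob_def L2_set_def by (intro arg_cong[where f = sqrt] sum.cong) auto

lemma sqrt_outcome_prob_le:
  assumes "dim_vec u = n" "dim_vec v = n"
  shows "sqrt (outcome_prob u out x) \<le> sqrt (outcome_prob v out x) + vec_norm (u - v)"
proof -
  have "sqrt (outcome_prob u out x) = L2_set (\<lambda>k. if out k = x then cmod (u $ k) else 0) {..<n}"
    unfolding sqrt_outcome_prob_eq_L2_set using assms by simp
  also have "\<dots> \<le> L2_set (\<lambda>k. (if out k = x then cmod (v $ k) else 0) + cmod (u $ k - v $ k)) {..<n}"
    by (rule L2_set_mono) (auto simp: norm_triangle_sub)
  also have "\<dots> \<le> L2_set (\<lambda>k. if out k = x then cmod (v $ k) else 0) {..<n}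
                 + L2_set (\<lambda>k. cmod (u $ k - v $ k)) {..<n}"
    by (rule L2_set_triangle_ineq)
  also have "\<dots> = sqrt (outcome_prob v out x) + vec_norm (u - v)"
    unfolding sqrt_outcome_prob_eq_L2_set vec_norm_eq_L2_set using assms
    by (auto intro!: arg_cong2[where f = "(+)"] L2_set_cong)
  finally show ?thesis .
qed

lemma norm_diff_sq_le:
  fixes a b :: "'a :: real_normed_vector"
  shows "(norm (a - b))\<^sup>2 \<le> 2 * (norm a)\<^sup>2 + 2 * (norm b)\<^sup>2"
proof -
  have "(norm (a - b))\<^sup>2 \<le> (norm a + norm b)\<^sup>2"
    by (simp add: power_mono norm_triangle_ineq4)
  also have "\<dots> \<le> 2 * (norm a)\<^sup>2 + 2 * (norm b)\<^sup>2"
    using zero_le_power2[of "norm a - norm b"] by (simp add: power2_eq_square algebra_simps)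
  finally show ?thesis .
qed

lemma sq_norm_perm_mat_diff_le:
  assumes p: "involution_on n p" and q: "involution_on n q" and v: "v \<in> carrier_vec n"
    and differ: "\<And>i. i < n \<Longrightarrow> p i \<noteq> q i \<Longrightarrow> label i = s \<and> p i = i"
    and label_q: "\<And>i. i < n \<Longrightarrow> label (q i) = label i"
  shows "sq_norm (perm_mat n p *\<^sub>v v - perm_mat n q *\<^sub>v v) \<le> 4 * outcome_prob v label s"
proof -
  define w where "w i = (if label i = s then 2 * (cmod (v $ i))\<^sup>2 else 0)" for i
  have pq: "p i < n" "q i < n" if "i < n" for i
    using p q that unfolding involution_on_def by auto
  have "sq_norm (perm_mat n p *\<^sub>v v - perm_mat n q *\<^sub>v v) = (\<Sum>i<n. (cmod (v $ p i - v $ q i))\<^sup>2)"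
    unfolding sq_norm_def using v pq by (intro sum.cong) (auto simp: row_perm_mat)
  also have "\<dots> \<le> (\<Sum>i<n. w i + w (q i))"
  proof (rule sum_mono)
    fix i assume "i \<in> {..<n}"
    show "(cmod (v $ p i - v $ q i))\<^sup>2 \<le> w i + w (q i)"
      using differ[of i] label_q[of i] \<open>i \<in> {..<n}\<close> by (cases "p i = q i") (auto simp: w_def norm_diff_sq_le)
  qed
  also have "\<dots> = (\<Sum>i<n. w i) + (\<Sum>i<n. w (q i))"
    by (rule sum.distrib)
  also have "(\<Sum>i<n. w (q i)) = (\<Sum>i<n. w i)"
    using q unfolding involution_on_def by (intro sum.reindex_bij_witness[of _ q q]) auto
  also have "(\<Sum>i<n. w i) + (\<Sum>i<n. w i) = 4 * outcome_prob v label s"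
    using v by (simp add: w_def outcome_prob_def sum_distrib_left if_distrib cong: if_cong)
  finally show ?thesis .
qed

lemma vec_norm_query_gate_diff_le:
  assumes "2 \<le> d" "0 < W" "s < N" "v \<in> carrier_vec (2 * (N * d) * W)"
  shows "vec_norm (query_gate (oracle_mat N d s) W b *\<^sub>v v - query_gate (oracle_mat N d N) W b *\<^sub>v v)
    \<le> 2 * sqrt (outcome_prob v (marked_block N d W) s)"
proof -
  have "sq_norm (query_gate (oracle_mat N d s) W b *\<^sub>v v - query_gate (oracle_mat N d N) W b *\<^sub>v v)
      \<le> 4 * outcome_prob v (marked_block N d W) s"
    unfolding query_gate_oracle_mat[OF assms(1,2)]
    using assms query_perm_neq_reference marked_block_query_perm_reference
    by (intro sq_norm_perm_mat_diff_le involution_on_query_perm) auto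
  then show ?thesis
    unfolding vec_norm_def by (metis real_sqrt_le_mono real_sqrt_mult real_sqrt_four)
qed

fun query_inputs ::
  "complex mat \<Rightarrow> nat \<Rightarrow> (complex mat \<times> bool) list \<Rightarrow> complex vec \<Rightarrow> complex vec list" where
  "query_inputs U W [] v = []"
| "query_inputs U W ((A, b) # rest) v = A *\<^sub>v v # query_inputs U W rest (query_gate U W b *\<^sub>v (A *\<^sub>v v))"

lemma run_steps_unitary:
  assumes gate: "\<And>b. unitary_mat n (query_gate U W b)"
  shows "\<forall>s \<in> set steps. unitary_mat n (fst s) \<Longrightarrow> v \<in> carrier_vec n \<Longrightarrow>
    run_steps U W steps v \<in> carrier_vec n \<and> sq_norm (run_steps U W steps v) = sq_norm v"
proof (induction steps arbitrary: v)
  case (Cons step rest)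
  obtain A b where step: "step = (A, b)" by fastforce
  with Cons.prems have A: "unitary_mat n A" by simp
  let ?w = "query_gate U W b *\<^sub>v (A *\<^sub>v v)"
  have Av: "A *\<^sub>v v \<in> carrier_vec n"
    using mult_mat_vec_carrier[OF unitary_mat_carrier[OF A] Cons.prems(2)] .
  then have "?w \<in> carrier_vec n" "sq_norm ?w = sq_norm v"
    using mult_mat_vec_carrier[OF unitary_mat_carrier[OF gate]] Cons.prems(2)
    by (auto simp: unitary_sq_norm[OF gate] unitary_sq_norm[OF A])
  then show ?case using Cons step by simp
qed simp

lemma query_inputs_unitary:
  assumes gate: "\<And>b. unitary_mat n (query_gate U W b)"
  shows "\<forall>s \<in> set steps. unitary_mat n (fst s) \<Longrightarrow> v \<in> carrier_vec n \<Longrightarrow>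
    length (query_inputs U W steps v) = length steps \<and>
    (\<forall>y \<in> set (query_inputs U W steps v). y \<in> carrier_vec n \<and> sq_norm y = sq_norm v)"
proof (induction steps arbitrary: v)
  case (Cons step rest)
  obtain A b where step: "step = (A, b)" by fastforce
  with Cons.prems have A: "unitary_mat n A" by simp
  let ?w = "query_gate U W b *\<^sub>v (A *\<^sub>v v)"
  have Av: "A *\<^sub>v v \<in> carrier_vec n"
    using mult_mat_vec_carrier[OF unitary_mat_carrier[OF A] Cons.prems(2)] .
  then have "?w \<in> carrier_vec n" "sq_norm (A *\<^sub>v v) = sq_norm v" "sq_norm ?w = sq_norm v"
    using mult_mat_vec_carrier[OF unitary_mat_carrier[OF gate]] Cons.prems(2)
    by (auto simp: unitary_sq_norm[OF gate] unitary_sq_norm[OF A])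
  then show ?case using Cons step Av by simp
qed simp

text \<open>Hybrid argument: exchanging the oracle one query at a time, the two runs drift apart by at
  most the sum of the per-query discrepancies, evaluated on the inputs of the second run.\<close>

lemma run_steps_hybrid:
  assumes gate: "\<And>b. unitary_mat n (query_gate U W b)"
    and gate': "\<And>b. query_gate U' W b \<in> carrier_mat n n"
    and discrepancy: "\<And>b x. x \<in> carrier_vec n \<Longrightarrow>
        vec_norm (query_gate U W b *\<^sub>v x - query_gate U' W b *\<^sub>v x) \<le> g x"
  shows "\<forall>s \<in> set steps. unitary_mat n (fst s) \<Longrightarrow> v \<in> carrier_vec n \<Longrightarrow> w \<in> carrier_vec n \<Longrightarrow>
    vec_norm (run_steps U W steps v - run_steps U' W steps w)
      \<le> vec_norm (v - w) + sum_list (map g (query_inputs U' W steps w))"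
proof (induction steps arbitrary: v w)
  case (Cons step rest)
  obtain A b where step: "step = (A, b)" by fastforce
  with Cons.prems have A: "unitary_mat n A" by simp
  let ?G = "query_gate U W b" and ?G' = "query_gate U' W b"
  have Av: "A *\<^sub>v v \<in> carrier_vec n" "A *\<^sub>v w \<in> carrier_vec n"
    using Cons.prems unitary_mat_carrier[OF A] by auto
  have G: "?G \<in> carrier_mat n n" using unitary_mat_carrier[OF gate] .
  have "vec_norm (?G *\<^sub>v (A *\<^sub>v v) - ?G' *\<^sub>v (A *\<^sub>v w))
      \<le> vec_norm (?G *\<^sub>v (A *\<^sub>v v) - ?G *\<^sub>v (A *\<^sub>v w)) + vec_norm (?G *\<^sub>v (A *\<^sub>v w) - ?G' *\<^sub>v (A *\<^sub>v w))"
    using Av G gate'[of b] by (intro vec_norm_triangle) auto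
  also have "\<dots> \<le> vec_norm (v - w) + g (A *\<^sub>v w)"
    using Cons.prems Av unitary_vec_norm_diff[OF gate] unitary_vec_norm_diff[OF A] discrepancy
    by (simp add: add_mono)
  finally have "vec_norm (?G *\<^sub>v (A *\<^sub>v v) - ?G' *\<^sub>v (A *\<^sub>v w)) \<le> vec_norm (v - w) + g (A *\<^sub>v w)" .
  moreover have "?G *\<^sub>v (A *\<^sub>v v) \<in> carrier_vec n" "?G' *\<^sub>v (A *\<^sub>v w) \<in> carrier_vec n"
    using Av G gate'[of b] by auto
  ultimately show ?case
    using Cons.IH[of "?G *\<^sub>v (A *\<^sub>v v)" "?G' *\<^sub>v (A *\<^sub>v w)"] Cons.prems(1) step by simp
qed simp

lemma sum_sq_hybrid_weights_le:
  assumes "\<And>y. y \<in> set ys \<Longrightarrow> sq_norm y = 1"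
  shows "(\<Sum>s<N. (\<Sum>y\<leftarrow>ys. 2 * sqrt (outcome_prob y label s))\<^sup>2) \<le> 4 * (real (length ys))\<^sup>2"
proof -
  define T where "T = length ys"
  define P where "P s t = outcome_prob (ys ! t) label s" for s t
  have "(\<Sum>y\<leftarrow>ys. 2 * sqrt (outcome_prob y label s)) = (\<Sum>t<T. 2 * sqrt (P s t))" for s
    unfolding T_def P_def by (subst sum_list_sum_nth) (auto simp: atLeast0LessThan intro: sum.cong)
  then have "(\<Sum>s<N. (\<Sum>y\<leftarrow>ys. 2 * sqrt (outcome_prob y label s))\<^sup>2) = (\<Sum>s<N. (\<Sum>t<T. 2 * sqrt (P s t))\<^sup>2)"
    by simp
  also have "\<dots> \<le> (\<Sum>s<N. (\<Sum>t<T. (2 * sqrt (P s t))\<^sup>2) * real T)"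
    by (intro sum_mono) (metis card_lessThan sum_squared_le_sum_of_squares)
  also have "\<dots> = 4 * real T * (\<Sum>t<T. \<Sum>s<N. P s t)"
    by (simp add: power_mult_distrib P_def outcome_prob_nonneg sum_distrib_left sum_distrib_right
        sum.swap[of _ "{..<T}"] mult_ac)
  also have "\<dots> \<le> 4 * real T * (\<Sum>t<T. 1)"
  proof (intro mult_left_mono sum_mono)
    fix t assume "t \<in> {..<T}"
    then have "sq_norm (ys ! t) = 1" using assms unfolding T_def by simp
    then show "(\<Sum>s<N. P s t) \<le> 1"
      using sum_outcome_prob_le[where v = "ys ! t" and out = label and N = N] unfolding P_def by simp
  qed simp
  also have "\<dots> = 4 * (real (length ys))\<^sup>2"
    by (simp add: T_def power2_eq_square)
  finally show ?thesis .
qed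

text \<open>The counting step of the BBBV bound: each instance must be distinguished from the
  reference run by a large weight \<open>h s\<close>, but the squared weights sum to at most \<open>4 T\<^sup>2\<close>.\<close>

lemma sqrt_le_of_hybrid_bounds:
  fixes A B h :: "nat \<Rightarrow> real" and T :: nat
  assumes N: "2 \<le> N"
    and success: "\<And>s. s < N \<Longrightarrow> 2/3 \<le> A s"
    and close: "\<And>s. s < N \<Longrightarrow> sqrt (A s) \<le> sqrt (B s) + h s"
    and B_nonneg: "\<And>s. 0 \<le> B s" and B_sum: "(\<Sum>s<N. B s) \<le> 1"
    and h_sum: "(\<Sum>s<N. (h s)\<^sup>2) \<le> 4 * (real T)\<^sup>2"
  shows "sqrt (real N) \<le> 4 * real T"
proof -
  have A_le: "A s \<le> 2 * B s + 2 * (h s)\<^sup>2" if "s < N" for s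
  proof -
    have "A s = (sqrt (A s))\<^sup>2" using success[OF that] by simp
    also have "\<dots> \<le> (sqrt (B s) + h s)\<^sup>2"
      by (rule power_mono) (use close[OF that] success[OF that] in auto)
    also have "\<dots> \<le> 2 * B s + 2 * (h s)\<^sup>2"
      using zero_le_power2[of "sqrt (B s) - h s"] B_nonneg[of s]
      by (simp add: power2_eq_square algebra_simps)
    finally show ?thesis .
  qed
  have "T \<noteq> 0"
  proof
    assume "T = 0"
    then have "(\<Sum>s<N. (h s)\<^sup>2) = 0"
      using h_sum sum_nonneg[of "{..<N}" "\<lambda>s. (h s)\<^sup>2"] by simp
    then have "h s = 0" if "s < N" for s
      using that by (simp add: sum_nonneg_eq_0_iff)
    then have "A s \<le> B s" if "s < N" for s
      using close[OF that] that by simp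
    then have "(\<Sum>s<N. 2/3) \<le> (\<Sum>s<N. B s)"
      using success by (intro sum_mono) (meson lessThan_iff order_trans)
    then show False using N B_sum by simp
  qed
  have "(\<Sum>s<N. 2/3) \<le> (\<Sum>s<N. 2 * B s + 2 * (h s)\<^sup>2)"
    using success A_le by (intro sum_mono) (meson lessThan_iff order_trans)
  also have "\<dots> \<le> 2 + 8 * (real T)\<^sup>2"
    using B_sum h_sum by (simp add: sum.distrib sum_distrib_left[symmetric])
  finally have "2/3 * real N \<le> 2 + 8 * (real T)\<^sup>2" by simp
  moreover have "1 \<le> (real T)\<^sup>2" using \<open>T \<noteq> 0\<close> by (simp add: one_le_power)
  ultimately have "real N \<le> (4 * real T)\<^sup>2" by (simp add: power_mult_distrib)
  then show ?thesis by (simp add: real_le_lsqrt)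
qed

lemma sq_norm_ket: "k < n \<Longrightarrow> sq_norm (ket n k) = 1"
proof -
  assume "k < n"
  have "sq_norm (ket n k) = (\<Sum>i<n. if i = k then 1 else 0)"
    unfolding sq_norm_def ket_def by (intro sum.cong) auto
  then show ?thesis using \<open>k < n\<close> by simp
qed

lemma final_state_oracle_distance:
  assumes d: "2 \<le> d" and W: "0 < W" and s: "s < N"
    and valid: "valid_alg (2 * (N * d) * W) steps Af"
  defines "n \<equiv> 2 * (N * d) * W"
  shows "vec_norm (final_state (oracle_mat N d s) W steps Af n - final_state (oracle_mat N d N) W steps Af n)
    \<le> (\<Sum>y\<leftarrow>query_inputs (oracle_mat N d N) W steps (ket n 0).
          2 * sqrt (outcome_prob y (marked_block N d W) s))"
proof -
  have gate: "unitary_mat n (query_gate (oracle_mat N d s') W b)" for s' b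
    unfolding n_def using d W by (rule unitary_query_gate_oracle_mat)
  have steps: "\<forall>s \<in> set steps. unitary_mat n (fst s)" and Af: "unitary_mat n Af"
    using valid unfolding valid_alg_def n_def by auto
  have e0: "ket n 0 \<in> carrier_vec n" by (simp add: ket_def)
  have run: "run_steps (oracle_mat N d s') W steps (ket n 0) \<in> carrier_vec n" for s'
    using run_steps_unitary[OF gate steps e0] by simp
  have "vec_norm (final_state (oracle_mat N d s) W steps Af n - final_state (oracle_mat N d N) W steps Af n)
      = vec_norm (run_steps (oracle_mat N d s) W steps (ket n 0) - run_steps (oracle_mat N d N) W steps (ket n 0))"
    unfolding final_state_def by (rule unitary_vec_norm_diff[OF Af run run])
  also have "\<dots> \<le> vec_norm (ket n 0 - ket n 0) + (\<Sum>y\<leftarrow>query_inputs (oracle_mat N d N) W steps (ket n 0).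
          2 * sqrt (outcome_prob y (marked_block N d W) s))"
  proof (rule run_steps_hybrid[OF gate _ _ steps e0 e0])
    show "query_gate (oracle_mat N d N) W b \<in> carrier_mat n n" for b
      using unitary_mat_carrier[OF gate] .
    show "vec_norm (query_gate (oracle_mat N d s) W b *\<^sub>v x - query_gate (oracle_mat N d N) W b *\<^sub>v x)
        \<le> 2 * sqrt (outcome_prob x (marked_block N d W) s)" if "x \<in> carrier_vec n" for b x
      using vec_norm_query_gate_diff_le[OF d W s] that unfolding n_def by blast
  qed
  also have "vec_norm (ket n 0 - ket n 0) = 0"
    by (simp add: vec_norm_def sq_norm_def ket_def)
  finally show ?thesis by simp
qed

lemma oracle_query_lower_bound:
  assumes N: "2 \<le> N" and d: "2 \<le> d" and W: "0 < W"
    and valid: "valid_alg (2 * (N * d) * W) steps Af"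
    and success: "\<And>s. s < N \<Longrightarrow>
      2/3 \<le> outcome_prob (final_state (oracle_mat N d s) W steps Af (2 * (N * d) * W)) out s"
  shows "sqrt (real N) \<le> 4 * real (length steps)"
proof -
  define n where "n = 2 * (N * d) * W"
  define \<phi> where "\<phi> s = final_state (oracle_mat N d s) W steps Af n" for s
  define ys where "ys = query_inputs (oracle_mat N d N) W steps (ket n 0)"
  define h where "h s = (\<Sum>y\<leftarrow>ys. 2 * sqrt (outcome_prob y (marked_block N d W) s))" for s
  have gate: "unitary_mat n (query_gate (oracle_mat N d N) W b)" for b
    unfolding n_def using d W by (rule unitary_query_gate_oracle_mat)
  have steps: "\<forall>s \<in> set steps. unitary_mat n (fst s)" and Af: "unitary_mat n Af"
    using valid unfolding valid_alg_def n_def by auto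
  have e0: "ket n 0 \<in> carrier_vec n" "sq_norm (ket n 0) = 1"
    unfolding n_def using N d W by (simp_all add: sq_norm_ket) (simp add: ket_def)
  have dim: "dim_vec (\<phi> s) = n" for s
    using unitary_mat_carrier[OF Af] by (simp add: \<phi>_def final_state_def)
  have reference_norm: "sq_norm (\<phi> N) = 1"
    using run_steps_unitary[OF gate steps e0(1)] unitary_sq_norm[OF Af] e0(2)
    by (simp add: \<phi>_def final_state_def)
  have ys: "length ys = length steps" "\<And>y. y \<in> set ys \<Longrightarrow> sq_norm y = 1"
    using query_inputs_unitary[OF gate steps e0(1)] e0(2) unfolding ys_def by simp_all
  show ?thesis
  proof (rule sqrt_le_of_hybrid_bounds[OF N])
    fix s assume "s < N"
    show "2/3 \<le> outcome_prob (\<phi> s) out s"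
      using success[OF \<open>s < N\<close>] by (simp add: \<phi>_def n_def)
    show "sqrt (outcome_prob (\<phi> s) out s) \<le> sqrt (outcome_prob (\<phi> N) out s) + h s"
      using sqrt_outcome_prob_le[OF dim[of s] dim[of N], where out = out and x = s]
        final_state_oracle_distance[OF d W \<open>s < N\<close> valid]
      unfolding \<phi>_def h_def ys_def n_def by linarith
  next
    show "(\<Sum>s<N. outcome_prob (\<phi> N) out s) \<le> 1"
      using sum_outcome_prob_le[where v = "\<phi> N" and out = out and N = N] reference_norm by simp
    show "(\<Sum>s<N. (h s)\<^sup>2) \<le> 4 * (real (length steps))\<^sup>2"
      unfolding h_def ys(1)[symmetric] by (rule sum_sq_hybrid_weights_le) (rule ys(2))
    show "0 \<le> outcome_prob (\<phi> N) out s" for s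
      by (rule outcome_prob_nonneg)
  qed
qed

lemma outcome_prob_vectorize_diag_C:
  assumes "\<sigma> < N"
  shows "outcome_prob (vectorize (diag_C N \<sigma>)) (\<lambda>k. k div N) \<sigma> = 1"
proof -
  have "\<sigma> * N + \<sigma> < N * N"
  proof -
    have "\<sigma> * N + \<sigma> < (\<sigma> + 1) * N" using assms by simp
    also have "\<dots> \<le> N * N" using assms by (intro mult_right_mono) auto
    finally show ?thesis .
  qed
  have block: "k div N = \<sigma> \<and> k mod N = \<sigma> \<longleftrightarrow> k = \<sigma> * N + \<sigma>" for k
  proof
    assume "k div N = \<sigma> \<and> k mod N = \<sigma>"
    then show "k = \<sigma> * N + \<sigma>" using div_mult_mod_eq[of k N] by simp
  next
    assume "k = \<sigma> * N + \<sigma>"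
    then show "k div N = \<sigma> \<and> k mod N = \<sigma>" using assms by simp
  qed
  have dim: "dim_vec (vectorize (diag_C N \<sigma>)) = N * N"
    by (simp add: vectorize_def diag_C_def)
  have entry: "vectorize (diag_C N \<sigma>) $ k = (if k = \<sigma> * N + \<sigma> then 1 else 0)" if "k < N * N" for k
  proof -
    have "k div N < N" "k mod N < N" using that assms by (auto simp: less_mult_imp_div_less)
    then show ?thesis using that block[of k] by (simp add: vectorize_def diag_C_def)
  qed
  have "outcome_prob (vectorize (diag_C N \<sigma>)) (\<lambda>k. k div N) \<sigma>
      = (\<Sum>k<N * N. if k = \<sigma> * N + \<sigma> then 1 else 0)"
    unfolding outcome_prob_def dim using block by (intro sum.cong) (auto simp: entry)
  then show ?thesis using \<open>\<sigma> * N + \<sigma> < N * N\<close> by simp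
qed

theorem theorem4:
  shows
  "(\<exists>c>0. \<forall>(N::nat) (d::nat) (W::nat) (steps :: (complex mat \<times> bool) list) (Af :: complex mat)
        (out :: nat \<Rightarrow> nat).
      N \<ge> 2 \<longrightarrow> d \<ge> 2 \<longrightarrow> W \<ge> 1 \<longrightarrow>
      valid_alg (2 * (N * d) * W) steps Af \<longrightarrow>
      (\<forall>\<sigma><N. \<forall>U. block_encoding N d (diag_C N \<sigma>) U \<longrightarrow>
          outcome_prob (final_state U W steps Af (2 * (N * d) * W)) out \<sigma> \<ge> 2/3) \<longrightarrow>
      real (length steps) \<ge> c * sqrt (real N))
   \<and>
   (\<forall>(N::nat) \<sigma> (V :: complex mat). \<sigma> < N \<longrightarrow> unitary_mat (N * N) V \<longrightarrow>
      V *\<^sub>v ket (N * N) 0 = vectorize (diag_C N \<sigma>) \<longrightarrow>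
      outcome_prob (V *\<^sub>v ket (N * N) 0) (\<lambda>k. k div N) \<sigma> = 1)"
proof (intro conjI exI[of _ "1/4 :: real"] allI impI)
  show "(0 :: real) < 1/4" by simp
next
  fix N d W :: nat and steps :: "(complex mat \<times> bool) list" and Af :: "complex mat" and out :: "nat \<Rightarrow> nat"
  assume N: "N \<ge> 2" and d: "d \<ge> 2" and W: "W \<ge> 1"
    and valid: "valid_alg (2 * (N * d) * W) steps Af"
    and success: "\<forall>\<sigma><N. \<forall>U. block_encoding N d (diag_C N \<sigma>) U \<longrightarrow>
      outcome_prob (final_state U W steps Af (2 * (N * d) * W)) out \<sigma> \<ge> 2/3"
  have "sqrt (real N) \<le> 4 * real (length steps)"
  proof (rule oracle_query_lower_bound[OF N d _ valid])
    show "0 < W" using W by simp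
    show "2/3 \<le> outcome_prob (final_state (oracle_mat N d s) W steps Af (2 * (N * d) * W)) out s"
      if "s < N" for s
      using success block_encoding_oracle_mat[OF d that] that by blast
  qed
  then show "real (length steps) \<ge> 1/4 * sqrt (real N)" by simp
next
  fix N \<sigma> :: nat and V :: "complex mat"
  assume "\<sigma> < N" "V *\<^sub>v ket (N * N) 0 = vectorize (diag_C N \<sigma>)"
  then show "outcome_prob (V *\<^sub>v ket (N * N) 0) (\<lambda>k. k div N) \<sigma> = 1"
    by (simp add: outcome_prob_vectorize_diag_C)
qed

end
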